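(* Let $\varphi$ be an instance of 2-Clause 3-SAT and let $G(\varphi)$ be the graph constructed from $\varphi$ as described in the context. If $\mathrm{wcol}_2(G(\varphi)) \leq 5$, then $\varphi$ has a satisfying assignment.
   Context: 2-Clause 3-SAT: given a CNF formula $\varphi$ with clauses $c_1,\dots,c_m$ over variables $x_1,\dots,x_n$ in which each clause contains at most 3 literals and each literal ($x_j$ or $\overline{x}_j$) appears in exactly 2 clauses, decide whether $\varphi$ is satisfiable. It is assumed throughout that no variable appears twice in a single clause and that there are no clauses with a single literal (so each clause has 2 or 3 literals). Construction of $G(\varphi)$: for each clause $c_i$ create 6 vertices $u_i^1,\dots,u_i^6$. If $c_i$ contains only 2 literals, add 2 more vertices $f_i, f'_i$, each adjacent to all of $u_i^1,\dots,u_i^6$. For each variable $x_j$ create two vertices $v_j$ and $v'_j$ (for the literals $x_j$ and $\overline{x}_j$) joined by an edge. For each clause $c_i$ containing the literal $x_j$, add an edge from $v_j$ to each of $u_i^1,\dots,u_i^6$; for each clause $c_i$ containing $\overline{x}_j$, add an edge from $v'_j$ to each of $u_i^1,\dots,u_i^6$. Weak coloring numbers: for a graph $G=(V,E)$ and a total order $\sigma$ of $V$, a vertex $v\neq u$ is weakly $r$-reachable from $u$ if $u <_\sigma v$ and there is a $u$–$v$ path $P$ of length at most $r$ such that every vertex $p$ of $P$ other than $u,v$ satisfies $p <_\sigma v$. Let $\mathrm{wreach}_r(u,G_\sigma)$ be the set of such $v$. Then $\mathrm{wcol}_r(G)=\min_\sigma \max_{u\in V}|\mathrm{wreach}_r(u,G_\sigma)|$,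 the minimum over all total orders of $V$. *)

theory Defs
  imports Main
begin

text \<open>A literal is a pair (j, b): (j, True) is x_j, (j, False) is
  the negated literal.\<close>

type_synonym lit = "nat \<times> bool"

definition two_clause_3sat :: "nat \<Rightarrow> nat \<Rightarrow> (nat \<Rightarrow> lit set) \<Rightarrow> bool" where
  "two_clause_3sat n m c \<longleftrightarrow>
     (\<forall>i<m. c i \<subseteq> {..<n} \<times> UNIV \<and> (card (c i) = 2 \<or> card (c i) = 3)
             \<and> (\<forall>j b b'. (j, b) \<in> c i \<and> (j, b') \<in> c i \<longrightarrow> b = b'))
   \<and> (\<forall>j<n. \<forall>b. card {i. i < m \<and> (j, b) \<in> c i} = 2)"

definition satisfiable :: "nat \<Rightarrow> nat \<Rightarrow> (nat \<Rightarrow> lit set) \<Rightarrow> bool" where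
  "satisfiable n m c \<longleftrightarrow> (\<exists>a :: nat \<Rightarrow> bool. \<forall>i<m. \<exists>(j, b) \<in> c i. a j = b)"

datatype gvert = U nat nat | F nat | F' nat | V nat | V' nat

definition gverts :: "nat \<Rightarrow> nat \<Rightarrow> (nat \<Rightarrow> lit set) \<Rightarrow> gvert set" where
  "gverts n m c =
     {U i k | i k. i < m \<and> 1 \<le> k \<and> k \<le> 6}
   \<union> {F i | i. i < m \<and> card (c i) = 2}
   \<union> {F' i | i. i < m \<and> card (c i) = 2}
   \<union> {V j | j. j < n} \<union> {V' j | j. j < n}"

definition gedge0 :: "nat \<Rightarrow> nat \<Rightarrow> (nat \<Rightarrow> lit set) \<Rightarrow> gvert \<Rightarrow> gvert \<Rightarrow> bool" where
  "gedge0 n m c x y \<longleftrightarrow>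
     (\<exists>i k. i < m \<and> card (c i) = 2 \<and> 1 \<le> k \<and> k \<le> 6 \<and> x = F i \<and> y = U i k)
   \<or> (\<exists>i k. i < m \<and> card (c i) = 2 \<and> 1 \<le> k \<and> k \<le> 6 \<and> x = F' i \<and> y = U i k)
   \<or> (\<exists>j. j < n \<and> x = V j \<and> y = V' j)
   \<or> (\<exists>i j k. i < m \<and> j < n \<and> (j, True) \<in> c i \<and> 1 \<le> k \<and> k \<le> 6 \<and> x = V j \<and> y = U i k)
   \<or> (\<exists>i j k. i < m \<and> j < n \<and> (j, False) \<in> c i \<and> 1 \<le> k \<and> k \<le> 6 \<and> x = V' j \<and> y = U i k)"

definition gedge :: "nat \<Rightarrow> nat \<Rightarrow> (nat \<Rightarrow> lit set) \<Rightarrow> gvert \<Rightarrow> gvert \<Rightarrow> bool" where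
  "gedge n m c x y \<longleftrightarrow> gedge0 n m c x y \<or> gedge0 n m c y x"

text \<open>A graph is given by a vertex set Vs and a symmetric adjacency relation E.
  A total order sigma of Vs is a linear order relation R on Vs
  (u <_sigma v iff (u,v) in R and u ~= v).\<close>

definition is_path :: "'a set \<Rightarrow> ('a \<Rightarrow> 'a \<Rightarrow> bool) \<Rightarrow> 'a list \<Rightarrow> bool" where
  "is_path Vs E P \<longleftrightarrow> P \<noteq> [] \<and> distinct P \<and> set P \<subseteq> Vs
     \<and> (\<forall>k. Suc k < length P \<longrightarrow> E (P ! k) (P ! Suc k))"

definition wreach :: "nat \<Rightarrow> 'a set \<Rightarrow> ('a \<Rightarrow> 'a \<Rightarrow> bool) \<Rightarrow> 'a rel \<Rightarrow> 'a \<Rightarrow> 'a set" where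
  "wreach r Vs E R u =
     {v \<in> Vs. v \<noteq> u \<and> (u, v) \<in> R \<and>
        (\<exists>P. is_path Vs E P \<and> hd P = u \<and> last P = v \<and> length P - 1 \<le> r
             \<and> (\<forall>p \<in> set P - {u, v}. (p, v) \<in> R \<and> p \<noteq> v))}"

definition wcol :: "nat \<Rightarrow> 'a set \<Rightarrow> ('a \<Rightarrow> 'a \<Rightarrow> bool) \<Rightarrow> nat" where
  "wcol r Vs E =
     Min {Max ((\<lambda>u. card (wreach r Vs E R u)) ` Vs) | R. linear_order_on Vs R}"

end

theory Submission
  imports Defs
begin

text \<open>Read a truth assignment off an order witnessing \<open>wcol\<^sub>2 \<le> 5\<close>: \<open>x\<^sub>j\<close> is true iff \<open>v'\<^sub>j\<close>
  precedes \<open>v\<^sub>j\<close>, i.e.\ the literal whose vertex comes later is made true. Suppose a clause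
  \<open>c\<^sub>i\<close> is falsified, so each of its literal vertices precedes the vertex of the opposite
  literal. The six vertices \<open>u\<^sub>i\<^sup>k\<close> together with their neighbours \<open>N\<^sub>i\<close> (the literal vertices
  of \<open>c\<^sub>i\<close>, plus \<open>f\<^sub>i, f'\<^sub>i\<close> if \<open>|c\<^sub>i| = 2\<close>) form a complete bipartite graph; let \<open>z\<close> be its
  least vertex. If \<open>z \<in> N\<^sub>i\<close>, it weakly 1-reaches all six \<open>u\<^sub>i\<^sup>k\<close>. If \<open>z = u\<^sub>i\<^sup>k\<close>, it weakly
  1-reaches the \<open>|N\<^sub>i|\<close> vertices of \<open>N\<^sub>i\<close> and, through each literal vertex, weakly 2-reaches
  the \<open>|c\<^sub>i|\<close> opposite literal vertices, again six in total.\<close>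

lemma wcol_leE:
  assumes fin: "finite Vs" and le: "wcol r Vs E \<le> k"
  obtains R where "linear_order_on Vs R" and "\<And>u. u \<in> Vs \<Longrightarrow> card (wreach r Vs E R u) \<le> k"
proof -
  define val where "val R = Max ((\<lambda>u. card (wreach r Vs E R u)) ` Vs)" for R
  define S where "S = {val R | R. linear_order_on Vs R}"
  have "S \<subseteq> val ` Pow (Vs \<times> Vs)"
    unfolding S_def order_on_defs by blast
  hence "finite S"
    using fin by (meson finite_Pow_iff finite_SigmaI finite_imageI finite_subset)
  moreover obtain R0 where "well_order_on Vs R0"
    using well_order_on by blast
  hence "S \<noteq> {}"
    unfolding S_def well_order_on_def by blast
  ultimately have "Min S \<in> S" by (rule Min_in)
  then obtain R where R: "linear_order_on Vs R" and "Min S = val R"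
    unfolding S_def by blast
  moreover have "Min S \<le> k"
    using le unfolding wcol_def S_def val_def by simp
  ultimately show thesis
    using fin by (intro that[OF R]) (auto simp: val_def intro: le_trans[rotated])
qed

lemma linear_order_on_total:
  assumes R: "linear_order_on A R" and "x \<in> A" "y \<in> A" "(x, y) \<notin> R"
  shows "(y, x) \<in> R"
  using assms refl_onD[OF partial_order_onD(1)] unfolding linear_order_on_def total_on_def
  by metis

lemma linear_order_on_least:
  assumes R: "linear_order_on A R" and "finite A" and "X \<subseteq> A" and "x \<in> X"
  obtains z where "z \<in> X" and "\<And>y. y \<in> X \<Longrightarrow> (z, y) \<in> R"
proof -
  have "finite R"
    using R \<open>finite A\<close> unfolding linear_order_on_def
    by (blast intro: finite_subset dest: partial_order_onD(4))
  hence "wf (R - Id)"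
    using R linear_order_on_well_order_on well_order_on_def by blast
  then obtain z where z: "z \<in> X" and zmin: "\<And>y. (y, z) \<in> R - Id \<Longrightarrow> y \<notin> X"
    using \<open>x \<in> X\<close> by (rule wfE_min) blast
  have "(z, y) \<in> R" if "y \<in> X" for y
  proof (cases "y = z")
    case True
    thus ?thesis using linear_order_on_total[OF R] z \<open>X \<subseteq> A\<close> by blast
  next
    case False
    hence "(y, z) \<notin> R" using zmin that by blast
    thus ?thesis using linear_order_on_total[OF R] z that \<open>X \<subseteq> A\<close> by blast
  qed
  with z show thesis by (rule that)
qed

lemma wreach_subset: "wreach r Vs E R u \<subseteq> Vs"
  unfolding wreach_def by blast

lemma neighbour_in_wreach:
  assumes "u \<in> Vs" "v \<in> Vs" "v \<noteq> u" "(u, v) \<in> R" "E u v" "1 \<le> r"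
  shows "v \<in> wreach r Vs E R u"
proof -
  have "is_path Vs E [u, v]"
    unfolding is_path_def using assms by (auto simp: less_Suc_eq)
  thus ?thesis
    unfolding wreach_def using assms by (intro CollectI conjI exI[of _ "[u, v]"]) auto
qed

lemma two_step_in_wreach:
  assumes "u \<in> Vs" "x \<in> Vs" "v \<in> Vs" "distinct [u, x, v]" "(u, v) \<in> R" "(x, v) \<in> R"
    "E u x" "E x v" "2 \<le> r"
  shows "v \<in> wreach r Vs E R u"
proof -
  have "is_path Vs E [u, x, v]"
    unfolding is_path_def using assms by (auto simp: less_Suc_eq nth_Cons split: nat.splits)
  thus ?thesis
    unfolding wreach_def using assms by (intro CollectI conjI exI[of _ "[u, x, v]"]) auto
qed

definition lit_vertex :: "lit \<Rightarrow> gvert" where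
  "lit_vertex l = (if snd l then V (fst l) else V' (fst l))"

definition neg_lit :: "lit \<Rightarrow> lit" where
  "neg_lit l = (fst l, \<not> snd l)"

definition clause_block :: "nat \<Rightarrow> gvert set" where
  "clause_block i = U i ` {1..6}"

definition clause_nbrs :: "(nat \<Rightarrow> lit set) \<Rightarrow> nat \<Rightarrow> gvert set" where
  "clause_nbrs c i = lit_vertex ` c i \<union> (if card (c i) = 2 then {F i, F' i} else {})"

definition order_assignment :: "gvert rel \<Rightarrow> nat \<Rightarrow> bool" where
  "order_assignment R j \<longleftrightarrow> (V' j, V j) \<in> R"

lemma inj_lit_vertex: "inj lit_vertex"
  unfolding inj_def lit_vertex_def by (auto split: if_splits simp: prod_eq_iff)

lemma lit_vertex_neg_lit_neq: "lit_vertex (neg_lit l) \<noteq> lit_vertex l"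
  unfolding lit_vertex_def neg_lit_def by auto

lemma inj_neg_lit: "inj neg_lit"
  unfolding inj_def neg_lit_def by (simp add: prod_eq_iff)

lemma card_clause_block: "card (clause_block i) = 6"
  unfolding clause_block_def by (subst card_image) (auto simp: inj_on_def)

lemma finite_gverts: "finite (gverts n m c)"
proof -
  have "gverts n m c \<subseteq> (\<lambda>(i, k). U i k) ` ({..<m} \<times> {..6}) \<union> F ` {..<m} \<union> F' ` {..<m}
      \<union> V ` {..<n} \<union> V' ` {..<n}"
    unfolding gverts_def by auto
  thus ?thesis by (rule finite_subset) auto
qed

lemma lit_vertex_in_gverts: "fst l < n \<Longrightarrow> lit_vertex l \<in> gverts n m c"
  unfolding lit_vertex_def gverts_def by auto

lemma clause_block_subset_gverts: "i < m \<Longrightarrow> clause_block i \<subseteq> gverts n m c"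
  unfolding clause_block_def gverts_def by auto

lemma gedge_lit_vertex_neg_lit:
  "fst l < n \<Longrightarrow> gedge n m c (lit_vertex l) (lit_vertex (neg_lit l))"
  unfolding gedge_def gedge0_def lit_vertex_def neg_lit_def by auto

lemma gedge_sym: "gedge n m c x y \<longleftrightarrow> gedge n m c y x"
  unfolding gedge_def by blast

lemma lit_vertex_notin_clause_block: "lit_vertex l \<notin> clause_block i"
  unfolding lit_vertex_def clause_block_def by auto

lemma clause_block_nbrs_disjoint: "clause_block i \<inter> clause_nbrs c i = {}"
  unfolding clause_nbrs_def clause_block_def lit_vertex_def by auto

lemma falsified_lit_precedes_neg_lit:
  assumes R: "linear_order_on (gverts n m c) R" and "fst l < n"
    and false: "order_assignment R (fst l) \<noteq> snd l"
  shows "(lit_vertex l, lit_vertex (neg_lit l)) \<in> R"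
proof (cases "snd l")
  case True
  have "(lit_vertex (neg_lit l), lit_vertex l) \<notin> R"
    using false True by (simp add: lit_vertex_def neg_lit_def order_assignment_def)
  moreover have "lit_vertex l \<in> gverts n m c" "lit_vertex (neg_lit l) \<in> gverts n m c"
    using \<open>fst l < n\<close> by (simp_all add: lit_vertex_in_gverts neg_lit_def)
  ultimately show ?thesis
    using linear_order_on_total[OF R] by blast
next
  case False
  thus ?thesis
    using false by (simp add: lit_vertex_def neg_lit_def order_assignment_def)
qed

context
  fixes n m :: nat and c :: "nat \<Rightarrow> lit set"
  assumes inst: "two_clause_3sat n m c"
begin

lemma clauseD:
  assumes "i < m"
  shows "\<And>l. l \<in> c i \<Longrightarrow> fst l < n" and "card (c i) = 2 \<or> card (c i) = 3" and "finite (c i)"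
    and "\<And>j b b'. (j, b) \<in> c i \<Longrightarrow> (j, b') \<in> c i \<Longrightarrow> b = b'"
proof -
  have ci: "c i \<subseteq> {..<n} \<times> UNIV" and card: "card (c i) = 2 \<or> card (c i) = 3"
    and uq: "\<forall>j b b'. (j, b) \<in> c i \<and> (j, b') \<in> c i \<longrightarrow> b = b'"
    using inst assms unfolding two_clause_3sat_def by blast+
  show "fst l < n" if "l \<in> c i" for l
    using ci that by (auto simp: mem_Times_iff)
  show "card (c i) = 2 \<or> card (c i) = 3" by (fact card)
  thus "finite (c i)"
    by (metis card.infinite zero_neq_numeral)
  show "b = b'" if "(j, b) \<in> c i" "(j, b') \<in> c i" for j b b'
    using uq that by blast
qed

lemma clause_nbrs_subset_gverts:
  assumes "i < m"
  shows "clause_nbrs c i \<subseteq> gverts n m c"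
proof -
  have "lit_vertex ` c i \<subseteq> gverts n m c"
    using clauseD(1)[OF assms] lit_vertex_in_gverts by blast
  moreover have "{F i, F' i} \<subseteq> gverts n m c" if "card (c i) = 2"
    using assms that unfolding gverts_def by blast
  ultimately show ?thesis
    unfolding clause_nbrs_def by auto
qed

lemma gedge_clause_block_nbrs:
  assumes "i < m" "u \<in> clause_block i" "w \<in> clause_nbrs c i"
  shows "gedge n m c u w"
proof -
  obtain k where k: "1 \<le> k" "k \<le> 6" "u = U i k"
    using assms(2) unfolding clause_block_def by auto
  have "gedge0 n m c w (U i k)"
  proof (cases "w \<in> lit_vertex ` c i")
    case True
    then obtain j b where jb: "(j, b) \<in> c i" "w = lit_vertex (j, b)" by auto
    have "j < n" using clauseD(1)[OF assms(1) jb(1)] by simp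
    thus ?thesis using jb k assms(1) unfolding gedge0_def lit_vertex_def by (cases b) auto
  next
    case False
    thus ?thesis using assms(1,3) k unfolding clause_nbrs_def gedge0_def by (auto split: if_splits)
  qed
  thus ?thesis unfolding gedge_def k(3) by simp
qed

lemma card_clause_nbrs_neg_lits:
  assumes "i < m"
  shows "card (clause_nbrs c i \<union> lit_vertex ` neg_lit ` c i) = 6"
proof -
  define L where "L = lit_vertex ` c i"
  define N where "N = lit_vertex ` neg_lit ` c i"
  have fin: "finite L" "finite N"
    unfolding L_def N_def using clauseD(3)[OF assms] by simp_all
  have "neg_lit l \<notin> c i" if "l \<in> c i" for l
    using clauseD(4)[OF assms, of "fst l" "snd l" "\<not> snd l"] that by (auto simp: neg_lit_def)
  hence "c i \<inter> neg_lit ` c i = {}" by blast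
  hence disj: "L \<inter> N = {}"
    unfolding L_def N_def using inj_lit_vertex by (simp add: image_Int[symmetric])
  have card_inj: "card (f ` c i) = card (c i)" if "inj f" for f :: "lit \<Rightarrow> 'a"
    using that by (simp add: card_image inj_on_subset)
  have "card L = card (c i)"
    unfolding L_def by (rule card_inj[OF inj_lit_vertex])
  moreover have "card N = card (c i)"
    unfolding N_def image_comp by (rule card_inj[OF inj_compose[OF inj_lit_vertex inj_neg_lit]])
  ultimately have cardLN: "card (L \<union> N) = 2 * card (c i)"
    using card_Un_disjoint[OF fin disj] by simp
  consider "card (c i) = 2" | "card (c i) = 3"
    using clauseD(2)[OF assms] by blast
  thus ?thesis
  proof cases
    case 1
    have "{F i, F' i} \<inter> (L \<union> N) = {}"
      unfolding L_def N_def lit_vertex_def by auto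
    hence "card ({F i, F' i} \<union> (L \<union> N)) = 2 + card (L \<union> N)"
      using fin by (simp add: card_Un_disjoint)
    moreover have "clause_nbrs c i \<union> N = {F i, F' i} \<union> (L \<union> N)"
      unfolding clause_nbrs_def L_def using 1 by auto
    ultimately show ?thesis
      using cardLN 1 by (simp add: N_def)
  next
    case 2
    hence "clause_nbrs c i = L" unfolding clause_nbrs_def L_def by simp
    thus ?thesis using cardLN 2 by (simp add: N_def)
  qed
qed

lemma least_clause_nbr_wreach:
  assumes "i < m" and z: "z \<in> clause_nbrs c i"
    and least: "\<And>y. y \<in> clause_block i \<Longrightarrow> (z, y) \<in> R" and "1 \<le> r"
  shows "clause_block i \<subseteq> wreach r (gverts n m c) (gedge n m c) R z"
proof
  fix v assume v: "v \<in> clause_block i"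
  show "v \<in> wreach r (gverts n m c) (gedge n m c) R z"
  proof (rule neighbour_in_wreach)
    show "z \<in> gverts n m c" using z clause_nbrs_subset_gverts[OF \<open>i < m\<close>] by blast
    show "v \<in> gverts n m c" using v clause_block_subset_gverts[OF \<open>i < m\<close>] by blast
    show "v \<noteq> z" using v z clause_block_nbrs_disjoint by blast
    show "gedge n m c z v" using gedge_clause_block_nbrs[OF \<open>i < m\<close> v z] gedge_sym by blast
  qed (use v least \<open>1 \<le> r\<close> in auto)
qed

lemma least_clause_block_vertex_wreach:
  assumes R: "linear_order_on (gverts n m c) R" and "i < m" and z: "z \<in> clause_block i"
    and least: "\<And>y. y \<in> clause_nbrs c i \<Longrightarrow> (z, y) \<in> R"
    and false: "\<And>l. l \<in> c i \<Longrightarrow> order_assignment R (fst l) \<noteq> snd l" and "2 \<le> r"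
  shows "clause_nbrs c i \<union> lit_vertex ` neg_lit ` c i \<subseteq> wreach r (gverts n m c) (gedge n m c) R z"
proof -
  have zV: "z \<in> gverts n m c" using z clause_block_subset_gverts[OF \<open>i < m\<close>] by blast
  have trans: "trans R" using R unfolding linear_order_on_def by (blast dest: partial_order_onD(2))
  have "v \<in> wreach r (gverts n m c) (gedge n m c) R z" if "v \<in> clause_nbrs c i" for v
  proof (rule neighbour_in_wreach)
    show "v \<in> gverts n m c" using that clause_nbrs_subset_gverts[OF \<open>i < m\<close>] by blast
    show "v \<noteq> z" using that z clause_block_nbrs_disjoint by blast
  qed (use zV that least gedge_clause_block_nbrs[OF \<open>i < m\<close> z] \<open>2 \<le> r\<close> in auto)
  moreover have "lit_vertex (neg_lit l) \<in> wreach r (gverts n m c) (gedge n m c) R z"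
    if l: "l \<in> c i" for l
  proof (rule two_step_in_wreach)
    have "fst l < n" using clauseD(1)[OF \<open>i < m\<close> l] .
    thus "lit_vertex l \<in> gverts n m c" "lit_vertex (neg_lit l) \<in> gverts n m c"
      by (simp_all add: lit_vertex_in_gverts neg_lit_def)
    show "gedge n m c (lit_vertex l) (lit_vertex (neg_lit l))"
      using \<open>fst l < n\<close> by (rule gedge_lit_vertex_neg_lit)
    show "(lit_vertex l, lit_vertex (neg_lit l)) \<in> R"
      using falsified_lit_precedes_neg_lit[OF R \<open>fst l < n\<close> false[OF l]] .
    moreover have "lit_vertex l \<in> clause_nbrs c i"
      using l unfolding clause_nbrs_def by blast
    ultimately show "(z, lit_vertex (neg_lit l)) \<in> R"
      using least trans by (meson transD)
    show "gedge n m c z (lit_vertex l)"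
      using gedge_clause_block_nbrs[OF \<open>i < m\<close> z \<open>lit_vertex l \<in> clause_nbrs c i\<close>] .
    show "distinct [z, lit_vertex l, lit_vertex (neg_lit l)]"
      using z lit_vertex_notin_clause_block[of l i] lit_vertex_notin_clause_block[of "neg_lit l" i]
        lit_vertex_neg_lit_neq[of l] by auto
  qed (use zV \<open>2 \<le> r\<close> in auto)
  ultimately show ?thesis by blast
qed

lemma falsified_clause_wreach_card:
  assumes R: "linear_order_on (gverts n m c) R" and "i < m"
    and false: "\<And>l. l \<in> c i \<Longrightarrow> order_assignment R (fst l) \<noteq> snd l"
  obtains z where "z \<in> gverts n m c" and "6 \<le> card (wreach 2 (gverts n m c) (gedge n m c) R z)"
proof -
  have sub: "clause_block i \<union> clause_nbrs c i \<subseteq> gverts n m c"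
    using clause_block_subset_gverts clause_nbrs_subset_gverts \<open>i < m\<close> by blast
  moreover have "U i 1 \<in> clause_block i \<union> clause_nbrs c i"
    unfolding clause_block_def by simp
  ultimately obtain z where z: "z \<in> clause_block i \<union> clause_nbrs c i"
    and least: "\<And>y. y \<in> clause_block i \<union> clause_nbrs c i \<Longrightarrow> (z, y) \<in> R"
    using linear_order_on_least[OF R finite_gverts] by blast
  have fin: "finite (wreach 2 (gverts n m c) (gedge n m c) R z)"
    using finite_subset[OF wreach_subset finite_gverts] .
  have "6 \<le> card (wreach 2 (gverts n m c) (gedge n m c) R z)"
  proof (cases "z \<in> clause_block i")
    case True
    thus ?thesis
      using card_mono[OF fin least_clause_block_vertex_wreach[OF R \<open>i < m\<close> True _ false]]
        least card_clause_nbrs_neg_lits[OF \<open>i < m\<close>] by simp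
  next
    case False
    hence "z \<in> clause_nbrs c i" using z by blast
    thus ?thesis
      using card_mono[OF fin least_clause_nbr_wreach[OF \<open>i < m\<close>]] least card_clause_block
      by simp
  qed
  with z sub show thesis using that by blast
qed

end

theorem lemma3p3:
  fixes n m :: nat and c :: "nat \<Rightarrow> lit set"
  assumes "two_clause_3sat n m c"
    and "wcol 2 (gverts n m c) (gedge n m c) \<le> 5"
  shows "satisfiable n m c"
proof (rule ccontr)
  assume unsat: "\<not> satisfiable n m c"
  obtain R where R: "linear_order_on (gverts n m c) R"
    and wcol5: "\<And>u. u \<in> gverts n m c \<Longrightarrow> card (wreach 2 (gverts n m c) (gedge n m c) R u) \<le> 5"
    using wcol_leE[OF finite_gverts assms(2)] by blast
  have "\<not> (\<forall>i<m. \<exists>(j, b) \<in> c i. order_assignment R j = b)"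
    using unsat unfolding satisfiable_def by (rule contrapos_nn) (rule exI)
  then obtain i where "i < m" and false: "\<forall>(j, b) \<in> c i. order_assignment R j \<noteq> b"
    by blast
  have "order_assignment R (fst l) \<noteq> snd l" if "l \<in> c i" for l
    using bspec[OF false that] by (simp add: case_prod_beta)
  then obtain z where z: "z \<in> gverts n m c"
    and "6 \<le> card (wreach 2 (gverts n m c) (gedge n m c) R z)"
    using falsified_clause_wreach_card[OF assms(1) R \<open>i < m\<close>] by blast
  with wcol5[OF z] show False by linarith
qed

end
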